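(* Let $s\ge1$, $n=2s$, let $A$ be the $n\times n$ matrix with $A_{ij}=1$ if $|i-j|\le s-1$ and $0$ otherwise, let $J$ be the $n\times n$ all-ones matrix and $B=J-A$. Label the eigenvalues of $A$ as $|\lambda_1(A)|\ge|\lambda_2(A)|\ge\dots\ge|\lambda_n(A)|$ and those of $B$ as $\gamma_1,\dots,\gamma_n$ with $|\gamma_1|\ge|\gamma_2|\ge\dots\ge|\gamma_n|$. Then $|\lambda_2(A)|=|\gamma_2|$. Moreover, $\lambda_2(A)$ and $\gamma_2$ have the same eigenvector, i.e. there is a nonzero vector which is an eigenvector of $A$ for $\lambda_2(A)$ and an eigenvector of $B$ for $\gamma_2$. *)

theory Defs
  imports "Jordan_Normal_Form.Char_Poly"
begin

definition bandA :: "nat \<Rightarrow> real mat" where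
  "bandA s = mat (2*s) (2*s) (\<lambda>(i,j). if \<bar>int i - int j\<bar> \<le> int s - 1 then 1 else 0)"

definition ones_mat :: "nat \<Rightarrow> real mat" where
  "ones_mat n = mat n n (\<lambda>_. 1)"

definition compB :: "nat \<Rightarrow> real mat" where
  "compB s = ones_mat (2*s) - bandA s"

text \<open>A labelling of the eigenvalues of a square real matrix (listed with algebraic
  multiplicity, i.e. as the roots of the characteristic polynomial) in order of
  non-increasing absolute value.\<close>
definition abs_sorted_eigenvalues :: "real mat \<Rightarrow> real list \<Rightarrow> bool" where
  "abs_sorted_eigenvalues M ls \<longleftrightarrow>
     length ls = dim_row M \<and>
     char_poly M = (\<Prod>a\<leftarrow>ls. [:- a, 1:]) \<and>
     sorted_wrt (\<lambda>x y. \<bar>x\<bar> \<ge> \<bar>y\<bar>) ls"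

end

theory Submission
  imports Defs "Jordan_Normal_Form.Schur_Decomposition"
begin

text \<open>Let \<open>\<theta> = \<pi> / (4s + 2)\<close> and \<open>\<sigma> = 1 / (2 sin \<theta>)\<close>. Extending the vector with
  entries \<open>cos ((2k + 1) \<theta>)\<close>, \<open>k < s\<close>, symmetrically, resp. antisymmetrically, to length \<open>2s\<close>
  yields eigenvectors \<open>p\<close> and \<open>w\<close> of \<open>B\<close> for \<open>\<sigma>\<close> and \<open>-\<sigma>\<close>: the entries of \<open>B p\<close> are
  partial sums of these cosines, which telescope because \<open>(2s + 1) \<theta> = \<pi> / 2\<close>. As \<open>B\<close> is
  symmetric and nonnegative and \<open>p\<close> is positive, the Schur test gives
  \<open>\<bar>x\<^sup>T B x\<bar> \<le> \<sigma> \<parallel>x\<parallel>\<^sup>2\<close>, so the spectrum of \<open>B\<close> lies in \<open>[-\<sigma>, \<sigma>]\<close> and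
  \<open>\<bar>\<gamma>\<^sub>2\<bar> = \<sigma>\<close>. Since \<open>w\<close> has coordinate sum 0, \<open>A w = J w - B w = \<sigma> w\<close>.
  From \<open>x\<^sup>T A x = (\<Sum>x)\<^sup>2 - x\<^sup>T B x\<close>, every eigenvalue of \<open>A\<close> is at least \<open>-\<sigma>\<close>, and on
  the hyperplane \<open>\<Sum>x = 0\<close> the form is at most \<open>\<sigma> \<parallel>x\<parallel>\<^sup>2\<close>, so at most one eigenvalue of
  \<open>A\<close> exceeds \<open>\<sigma>\<close>; for \<open>s \<ge> 2\<close> the all-ones vector has Rayleigh quotient at least
  \<open>s > \<sigma>\<close>, so one does (for \<open>s = 1\<close>, \<open>A = I\<close> and \<open>\<sigma> = 1\<close>). Hence
  \<open>\<bar>\<lambda>\<^sub>2(A)\<bar> = \<sigma>\<close>, and the orderings with \<open>\<lambda>\<^sub>2(A) = \<sigma>\<close> and \<open>\<gamma>\<^sub>2 = -\<sigma>\<close> share the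
  eigenvector \<open>w\<close>.\<close>

section \<open>Spectral theorem for real symmetric matrices\<close>

lemma real_scalar_prod_self_pos:
  fixes x :: "real vec"
  assumes "x \<in> carrier_vec n" and "x \<noteq> 0\<^sub>v n"
  shows "x \<bullet> x > 0"
  using conjugate_square_greater_0_vec[OF assms(1)] assms(2) by simp

lemma real_scalar_prod_self_nonneg: "0 \<le> (x :: real vec) \<bullet> x"
  using conjugate_square_ge_0_vec[of x] by simp

lemma scalar_prod_self_eq_sum_squares:
  "(x :: real vec) \<in> carrier_vec n \<Longrightarrow> x \<bullet> x = (\<Sum>i<n. (x $ i)\<^sup>2)"
  by (auto simp: scalar_prod_def atLeast0LessThan power2_eq_square intro!: sum.cong)

lemma scalar_prod_eq_double_sum:
  assumes "(M :: real mat) \<in> carrier_mat n n" and "x \<in> carrier_vec n"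
  shows "x \<bullet> (M *\<^sub>v x) = (\<Sum>i<n. \<Sum>j<n. M $$ (i,j) * x $ i * x $ j)"
  using assms by (auto simp: scalar_prod_def atLeast0LessThan sum_distrib_left intro!: sum.cong)

lemma scalar_prod_lin_comb:
  fixes x y :: "real vec"
  assumes x: "x \<in> carrier_vec n" and y: "y \<in> carrier_vec n"
  shows "(a \<cdot>\<^sub>v x + b \<cdot>\<^sub>v y) \<bullet> (c \<cdot>\<^sub>v x + d \<cdot>\<^sub>v y)
    = a * c * (x \<bullet> x) + a * d * (x \<bullet> y) + b * c * (y \<bullet> x) + b * d * (y \<bullet> y)"
proof -
  have "(a \<cdot>\<^sub>v x + b \<cdot>\<^sub>v y) \<bullet> (c \<cdot>\<^sub>v x + d \<cdot>\<^sub>v y)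
      = (a \<cdot>\<^sub>v x) \<bullet> (c \<cdot>\<^sub>v x + d \<cdot>\<^sub>v y) + (b \<cdot>\<^sub>v y) \<bullet> (c \<cdot>\<^sub>v x + d \<cdot>\<^sub>v y)"
    by (rule add_scalar_prod_distrib[of _ n], insert x y, auto)
  also have "(a \<cdot>\<^sub>v x) \<bullet> (c \<cdot>\<^sub>v x + d \<cdot>\<^sub>v y) = (a \<cdot>\<^sub>v x) \<bullet> (c \<cdot>\<^sub>v x) + (a \<cdot>\<^sub>v x) \<bullet> (d \<cdot>\<^sub>v y)"
    by (rule scalar_prod_add_distrib[of _ n], insert x y, auto)
  also have "(b \<cdot>\<^sub>v y) \<bullet> (c \<cdot>\<^sub>v x + d \<cdot>\<^sub>v y) = (b \<cdot>\<^sub>v y) \<bullet> (c \<cdot>\<^sub>v x) + (b \<cdot>\<^sub>v y) \<bullet> (d \<cdot>\<^sub>v y)"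
    by (rule scalar_prod_add_distrib[of _ n], insert x y, auto)
  finally show ?thesis using x y by (simp add: ac_simps)
qed

definition diag_block :: "'a::zero \<Rightarrow> 'a mat \<Rightarrow> 'a mat" where
  "diag_block c X = mat (Suc (dim_row X)) (Suc (dim_col X))
     (\<lambda>(i,j). if i = 0 \<and> j = 0 then c else if i = 0 \<or> j = 0 then 0 else X $$ (i-1, j-1))"

lemma diag_block_carrier [simp]:
  "X \<in> carrier_mat n m \<Longrightarrow> diag_block c X \<in> carrier_mat (Suc n) (Suc m)"
  unfolding diag_block_def by auto

lemma diag_block_dims [simp]:
  "dim_row (diag_block c X) = Suc (dim_row X)" "dim_col (diag_block c X) = Suc (dim_col X)"
  unfolding diag_block_def by auto

lemma diag_block_index:
  "i < Suc (dim_row X) \<Longrightarrow> j < Suc (dim_col X) \<Longrightarrow> diag_block c X $$ (i,j) =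
    (if i = 0 \<and> j = 0 then c else if i = 0 \<or> j = 0 then 0 else X $$ (i-1, j-1))"
  unfolding diag_block_def by auto

lemma transpose_diag_block: "(diag_block c X)\<^sup>T = diag_block c (X\<^sup>T)"
  by (rule eq_matI) (auto simp: diag_block_def)

lemma diag_block_mult:
  fixes X Y :: "'a :: semiring_1 mat"
  assumes X: "X \<in> carrier_mat n m" and Y: "Y \<in> carrier_mat m k"
  shows "diag_block a X * diag_block b Y = diag_block (a * b) (X * Y)"
proof (rule eq_matI)
  fix i j assume i: "i < dim_row (diag_block (a*b) (X*Y))" and j: "j < dim_col (diag_block (a*b) (X*Y))"
  have "(diag_block a X * diag_block b Y) $$ (i,j)
      = (\<Sum>l<Suc m. diag_block a X $$ (i,l) * diag_block b Y $$ (l,j))"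
    using i j X Y by (auto simp: scalar_prod_def atLeast0LessThan diag_block_def)
  also have "\<dots> = diag_block a X $$ (i,0) * diag_block b Y $$ (0,j)
      + (\<Sum>l<m. diag_block a X $$ (i,Suc l) * diag_block b Y $$ (Suc l,j))"
    by (rule sum.lessThan_Suc_shift)
  also have "\<dots> = diag_block (a*b) (X*Y) $$ (i,j)"
    using i j X Y
    by (cases i; cases j; auto simp: diag_block_index scalar_prod_def atLeast0LessThan diag_block_def)
  finally show "(diag_block a X * diag_block b Y) $$ (i,j) = diag_block (a*b) (X*Y) $$ (i,j)" .
qed (insert X Y, auto simp: diag_block_def)

lemma diag_block_one: "diag_block 1 (1\<^sub>m n) = 1\<^sub>m (Suc n)"
  by (rule eq_matI) (auto simp: diag_block_def)

lemma mat_diag_Suc: "mat_diag (Suc n) f = diag_block (f 0) (mat_diag n (\<lambda>i. f (Suc i)))"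
  by (rule eq_matI) (auto simp: diag_block_def mat_diag_def)

lemma transpose_mult_sandwich:
  fixes A B M :: "'a :: comm_semiring_1 mat"
  assumes A: "A \<in> carrier_mat n n" and B: "B \<in> carrier_mat n n" and M: "M \<in> carrier_mat n n"
  shows "(A * B)\<^sup>T * M * (A * B) = B\<^sup>T * (A\<^sup>T * M * A) * B"
proof -
  have "(A * B)\<^sup>T * M * (A * B) = B\<^sup>T * (A\<^sup>T * M) * (A * B)"
    using transpose_mult[OF A B] assoc_mult_mat[of "B\<^sup>T" n n "A\<^sup>T" n M n] A B M by simp
  also have "\<dots> = B\<^sup>T * ((A\<^sup>T * M) * A) * B"
    using A B M by (simp add: assoc_mult_mat[of _ n n _ n _ n])
  finally show ?thesis .
qed

lemma symmetric_real_mat_complex_eigenvalue_real: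
  fixes M :: "real mat"
  assumes M: "M \<in> carrier_mat n n" and sym: "M\<^sup>T = M"
    and ev: "eigenvector (map_mat complex_of_real M) x z"
  shows "z \<in> \<real>"
proof -
  define Mc where "Mc = map_mat complex_of_real M"
  have "Mc \<in> carrier_mat n n" using M by (auto simp: Mc_def)
  hence x: "x \<in> carrier_vec n" and x0: "x \<noteq> 0\<^sub>v n" and Mx: "Mc *\<^sub>v x = z \<cdot>\<^sub>v x"
    using ev unfolding eigenvector_def Mc_def by auto
  txt \<open>The Hermitian form \<open>q = x\<^sup>* M x\<close> is real and equals \<open>z \<parallel>x\<parallel>\<^sup>2\<close>.\<close>
  define q where "q = (\<Sum>i<n. \<Sum>j<n. complex_of_real (M $$ (i,j)) * cnj (x $ i) * x $ j)"
  define N where "N = (\<Sum>i<n. cnj (x $ i) * x $ i)"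
  have "q = (\<Sum>i<n. cnj (x $ i) * (Mc *\<^sub>v x) $ i)"
    unfolding q_def using M x
    by (auto simp: Mc_def scalar_prod_def sum_distrib_left atLeast0LessThan intro!: sum.cong)
  also have "\<dots> = z * N" unfolding Mx N_def using x by (auto simp: sum_distrib_left intro!: sum.cong)
  finally have qz: "q = z * N" .
  have "cnj q = (\<Sum>i<n. \<Sum>j<n. complex_of_real (M $$ (i,j)) * x $ i * cnj (x $ j))"
    unfolding q_def by (simp add: cnj_sum)
  also have "\<dots> = (\<Sum>j<n. \<Sum>i<n. complex_of_real (M $$ (i,j)) * x $ i * cnj (x $ j))"
    by (rule sum.swap)
  also have "\<dots> = q" unfolding q_def
  proof (intro sum.cong refl)
    fix i j assume "i \<in> {..<n}" and "j \<in> {..<n}"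
    hence "M $$ (i,j) = M $$ (j,i)" using M sym
      by (metis carrier_matD(1) carrier_matD(2) index_transpose_mat(1) lessThan_iff)
    thus "complex_of_real (M $$ (i,j)) * x $ i * cnj (x $ j)
        = complex_of_real (M $$ (j,i)) * cnj (x $ j) * x $ i"
      by simp
  qed
  finally have q_real: "cnj q = q" .
  have N_eq: "N = complex_of_real (\<Sum>i<n. (cmod (x $ i))\<^sup>2)"
    unfolding N_def of_real_sum by (intro sum.cong refl, metis complex_norm_square mult.commute)
  obtain i0 where i0: "i0 < n" "x $ i0 \<noteq> 0"
    using x x0 by (metis eq_vecI carrier_vecD index_zero_vec)
  have "0 < (cmod (x $ i0))\<^sup>2" using i0 by auto
  also have "\<dots> \<le> (\<Sum>i<n. (cmod (x $ i))\<^sup>2)" by (rule member_le_sum, insert i0, auto)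
  finally have "N \<noteq> 0" unfolding N_eq of_real_eq_0_iff by linarith
  moreover have "cnj z * N = z * N" using q_real qz N_eq by (metis complex_cnj_complex_of_real complex_cnj_mult)
  ultimately have "cnj z = z" by simp
  thus ?thesis by (simp add: Reals_cnj_iff)
qed

lemma symmetric_real_mat_has_eigenvalue:
  fixes M :: "real mat"
  assumes M: "M \<in> carrier_mat n n" and sym: "M\<^sup>T = M" and n: "n > 0"
  shows "\<exists>e. eigenvalue M e"
proof -
  define Mc where "Mc = map_mat complex_of_real M"
  have Mc: "Mc \<in> carrier_mat n n" using M by (auto simp: Mc_def)
  obtain as where cp: "char_poly Mc = (\<Prod>a\<leftarrow>as. [:- a, 1:])" and len: "length as = n"
    using char_poly_factorized[OF Mc] by blast
  define z where "z = hd as"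
  have "as \<noteq> []" using len n by auto
  hence root: "poly (char_poly Mc) z = 0" unfolding cp z_def by (cases as, auto)
  then obtain x where "eigenvector Mc x z"
    using eigenvalue_root_char_poly[OF Mc] unfolding eigenvalue_def by auto
  hence "z = complex_of_real (Re z)"
    using symmetric_real_mat_complex_eigenvalue_real[OF M sym] unfolding Mc_def by (simp add: of_real_Re)
  hence "poly (map_poly complex_of_real (char_poly M)) (complex_of_real (Re z)) = 0"
    using root of_real_hom.char_poly_hom[OF M] unfolding Mc_def by metis
  hence "poly (char_poly M) (Re z) = 0" by (simp add: of_real_hom.poly_map_poly)
  thus ?thesis using eigenvalue_root_char_poly[OF M] by auto
qed

definition normalize_vec :: "real vec \<Rightarrow> real vec" where
  "normalize_vec w = (1 / sqrt (w \<bullet> w)) \<cdot>\<^sub>v w"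

lemma orthonormal_mat_of_normalized_cols:
  fixes ws :: "real vec list"
  assumes ws: "set ws \<subseteq> carrier_vec n" and orth: "corthogonal ws" and len: "length ws = n"
  defines "W \<equiv> mat_of_cols n (map normalize_vec ws)"
  shows "W\<^sup>T * W = 1\<^sub>m n"
proof (rule eq_matI)
  fix i j assume "i < dim_row (1\<^sub>m n)" and "j < dim_col (1\<^sub>m n)"
  hence i: "i < n" and j: "j < n" by auto
  have wi: "ws ! i \<in> carrier_vec n" and wj: "ws ! j \<in> carrier_vec n" using ws i j len by auto
  have "(W\<^sup>T * W) $$ (i,j) = normalize_vec (ws ! i) \<bullet> normalize_vec (ws ! j)"
    unfolding W_def using i j len wi wj by (simp add: normalize_vec_def)
  also have "\<dots> = (1 / sqrt (ws ! i \<bullet> ws ! i)) * (1 / sqrt (ws ! j \<bullet> ws ! j)) * (ws ! i \<bullet> ws ! j)"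
    unfolding normalize_vec_def using wi wj by simp
  also have "\<dots> = 1\<^sub>m n $$ (i,j)"
  proof (cases "i = j")
    case True
    have "ws ! i \<bullet> ws ! i > 0"
      using real_scalar_prod_self_nonneg[of "ws ! i"] corthogonalD[OF orth, of i i] i len
      by (simp add: order_less_le)
    thus ?thesis using True i by (simp add: field_simps)
  next
    case False
    hence "ws ! i \<bullet> ws ! j = 0" using corthogonalD[OF orth, of i j] i j len by auto
    thus ?thesis using False i j by simp
  qed
  finally show "(W\<^sup>T * W) $$ (i,j) = 1\<^sub>m n $$ (i,j)" .
qed (use len in \<open>auto simp: W_def\<close>)

lemma orthonormal_completion:
  fixes v :: "real vec"
  assumes v: "v \<in> carrier_vec n" and vn: "v \<bullet> v = 1"
  shows "\<exists>W. W \<in> carrier_mat n n \<and> W\<^sup>T * W = 1\<^sub>m n \<and> col W 0 = v"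
proof -
  have v0: "v \<noteq> 0\<^sub>v n" using vn v by auto
  have n: "n > 0" using v vn by (cases n, auto simp: scalar_prod_def)
  interpret cof_vec_space n "TYPE(real)" .
  define b where "b = basis_completion v"
  from basis_completion[OF v v0, folded b_def]
  have dist_b: "distinct b" and indep: "\<not> lin_dep (set b)" and b: "set b \<subseteq> carrier_vec n"
    and hdb: "hd b = v" and len_b: "length b = n" by auto
  define ws where "ws = gram_schmidt n b"
  from gram_schmidt_result[OF b dist_b indep ws_def]
  have orth: "corthogonal ws" and wsc: "set ws \<subseteq> carrier_vec n" and lenw: "length ws = n"
    using len_b by auto
  from hdb len_b n obtain vs where "b = v # vs" by (cases b, auto)
  hence "hd ws = v" unfolding ws_def using gram_schmidt_hd[OF v] by simp
  hence "ws ! 0 = v" using lenw n by (cases ws, auto)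
  hence "col (mat_of_cols n (map normalize_vec ws)) 0 = v"
    using lenw n vn v by (simp add: normalize_vec_def)
  thus ?thesis using orthonormal_mat_of_normalized_cols[OF wsc orth lenw]
      mat_of_cols_carrier(1)[of n "map normalize_vec ws"] lenw
    by (intro exI[of _ "mat_of_cols n (map normalize_vec ws)"]) simp
qed

lemma orthogonal_deflation:
  fixes M W :: "real mat"
  assumes M: "M \<in> carrier_mat (Suc n) (Suc n)" and sym: "M\<^sup>T = M"
    and W: "W \<in> carrier_mat (Suc n) (Suc n)" and orth: "W\<^sup>T * W = 1\<^sub>m (Suc n)"
    and ev: "M *\<^sub>v col W 0 = e \<cdot>\<^sub>v col W 0"
  shows "\<exists>N. N \<in> carrier_mat n n \<and> N\<^sup>T = N \<and> W\<^sup>T * M * W = diag_block e N"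
proof -
  define A where "A = W\<^sup>T * M * W"
  have A: "A \<in> carrier_mat (Suc n) (Suc n)" unfolding A_def using W M by auto
  have A_sym: "A\<^sup>T = A"
  proof -
    have "A\<^sup>T = W\<^sup>T * (W\<^sup>T * M)\<^sup>T"
      unfolding A_def using transpose_mult[of "W\<^sup>T * M" "Suc n" "Suc n" W] W M by simp
    also have "(W\<^sup>T * M)\<^sup>T = M * W" using transpose_mult[of "W\<^sup>T" "Suc n" "Suc n" M] W M sym by simp
    finally show ?thesis unfolding A_def using W M by (simp add: assoc_mult_mat[of _ "Suc n" "Suc n"])
  qed
  have col0: "A $$ (i, 0) = (if i = 0 then e else 0)" if i: "i < Suc n" for i
  proof -
    have "A $$ (i,0) = row (W\<^sup>T) i \<bullet> col (M * W) 0"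
      unfolding A_def using i W M by (simp add: assoc_mult_mat[of _ "Suc n" "Suc n"])
    also have "col (M * W) 0 = M *\<^sub>v col W 0" by (rule col_mult2[OF M W]) simp
    also have "\<dots> = e \<cdot>\<^sub>v col W 0" by (rule ev)
    also have "row (W\<^sup>T) i \<bullet> (e \<cdot>\<^sub>v col W 0) = e * (W\<^sup>T * W) $$ (i,0)" using W i by auto
    finally show ?thesis using orth i by auto
  qed
  have row0: "A $$ (0, j) = (if j = 0 then e else 0)" if j: "j < Suc n" for j
  proof -
    have "A $$ (0, j) = A\<^sup>T $$ (j, 0)" using A j by auto
    thus ?thesis using A_sym col0[OF j] by simp
  qed
  define N where "N = mat n n (\<lambda>(i,j). A $$ (Suc i, Suc j))"
  have "N\<^sup>T = N"
  proof (rule eq_matI)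
    fix i j assume "i < dim_row N" "j < dim_col N"
    hence i: "i < n" and j: "j < n" by (auto simp: N_def)
    have "A $$ (Suc j, Suc i) = A\<^sup>T $$ (Suc i, Suc j)" using A i j by auto
    thus "N\<^sup>T $$ (i, j) = N $$ (i, j)" using i j A_sym by (simp add: N_def)
  qed (auto simp: N_def)
  moreover have "A = diag_block e N"
    by (rule eq_matI, insert A col0 row0, auto simp: diag_block_index N_def)
  ultimately show ?thesis unfolding A_def by (intro exI[of _ N]) (simp add: N_def)
qed

lemma symmetric_orthogonal_diagonalization:
  fixes M :: "real mat"
  assumes "M \<in> carrier_mat n n" and "M\<^sup>T = M"
  shows "\<exists>W d. W \<in> carrier_mat n n \<and> W\<^sup>T * W = 1\<^sub>m n \<and> W\<^sup>T * M * W = mat_diag n d"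
  using assms
proof (induction n arbitrary: M)
  case 0
  show ?case by (intro exI[of _ "1\<^sub>m 0"], auto intro!: eq_matI simp: mat_diag_def)
next
  case (Suc n M)
  note M = Suc.prems(1) and sym = Suc.prems(2)
  obtain e x where "eigenvector M x e"
    using symmetric_real_mat_has_eigenvalue[OF M sym] unfolding eigenvalue_def by auto
  hence x: "x \<in> carrier_vec (Suc n)" and x0: "x \<noteq> 0\<^sub>v (Suc n)" and Mx: "M *\<^sub>v x = e \<cdot>\<^sub>v x"
    unfolding eigenvector_def using M by auto
  define v where "v = (1 / sqrt (x \<bullet> x)) \<cdot>\<^sub>v x"
  have v: "v \<in> carrier_vec (Suc n)" using x unfolding v_def by auto
  have "v \<bullet> v = 1" unfolding v_def using x real_scalar_prod_self_pos[OF x x0] by simp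
  then obtain W1 where W1: "W1 \<in> carrier_mat (Suc n) (Suc n)" and W1o: "W1\<^sup>T * W1 = 1\<^sub>m (Suc n)"
    and W1v: "col W1 0 = v"
    using orthonormal_completion[OF v] by blast
  have "M *\<^sub>v col W1 0 = e \<cdot>\<^sub>v col W1 0" unfolding W1v v_def using Mx x M
    by (metis mult_mat_vec smult_smult_assoc mult.commute)
  then obtain N where N: "N \<in> carrier_mat n n" and N_sym: "N\<^sup>T = N"
    and W1MW1: "W1\<^sup>T * M * W1 = diag_block e N"
    using orthogonal_deflation[OF M sym W1 W1o] by blast
  obtain W2 d where W2: "W2 \<in> carrier_mat n n" and W2o: "W2\<^sup>T * W2 = 1\<^sub>m n"
    and W2NW2: "W2\<^sup>T * N * W2 = mat_diag n d"
    using Suc.IH[OF N N_sym] by blast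
  define W where "W = W1 * diag_block 1 W2"
  have L: "diag_block 1 W2 \<in> carrier_mat (Suc n) (Suc n)" using W2 by simp
  have W2T: "W2\<^sup>T \<in> carrier_mat n n" using W2 by simp
  have LT: "diag_block 1 (W2\<^sup>T) \<in> carrier_mat (Suc n) (Suc n)" using W2 by simp
  have one: "1\<^sub>m (Suc n) \<in> carrier_mat (Suc n) (Suc n)" by simp
  have W: "W \<in> carrier_mat (Suc n) (Suc n)" unfolding W_def using W1 L by simp
  have "W\<^sup>T * W = W\<^sup>T * 1\<^sub>m (Suc n) * W" using W by simp
  also have "\<dots> = diag_block 1 (W2\<^sup>T) * (W1\<^sup>T * 1\<^sub>m (Suc n) * W1) * diag_block 1 W2"
    unfolding W_def transpose_mult_sandwich[OF W1 L one] transpose_diag_block ..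
  also have "W1\<^sup>T * 1\<^sub>m (Suc n) * W1 = 1\<^sub>m (Suc n)" using W1 W1o by simp
  also have "diag_block 1 (W2\<^sup>T) * 1\<^sub>m (Suc n) * diag_block 1 W2 = diag_block (1 * 1) (W2\<^sup>T * W2)"
    using right_mult_one_mat[OF LT] diag_block_mult[OF W2T W2] by simp
  finally have Wo: "W\<^sup>T * W = 1\<^sub>m (Suc n)" by (simp add: W2o diag_block_one)
  have "W\<^sup>T * M * W = diag_block 1 (W2\<^sup>T) * (W1\<^sup>T * M * W1) * diag_block 1 W2"
    unfolding W_def transpose_mult_sandwich[OF W1 L M] transpose_diag_block ..
  also have "\<dots> = diag_block (1 * e * 1) (W2\<^sup>T * N * W2)"
    unfolding W1MW1 diag_block_mult[OF W2T N] diag_block_mult[OF mult_carrier_mat[OF W2T N] W2] ..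
  also have "\<dots> = mat_diag (Suc n) (case_nat e d)"
    unfolding W2NW2 mat_diag_Suc by simp
  finally show ?case using Wo W by blast
qed

lemma upper_triangular_mat_diag: "upper_triangular (mat_diag n d)"
  by (auto simp: upper_triangular_def mat_diag_def)

lemma char_poly_mat_diag:
  fixes d :: "nat \<Rightarrow> 'a :: comm_ring_1"
  shows "char_poly (mat_diag n d) = (\<Prod>i\<leftarrow>[0..<n]. [:- d i, 1:])"
proof -
  have "diag_mat (mat_diag n d) = map d [0..<n]"
    by (rule nth_equalityI) (auto simp: diag_mat_def mat_diag_def)
  thus ?thesis
    unfolding char_poly_upper_triangular[OF mat_diag_dim upper_triangular_mat_diag]
    by (simp add: comp_def)
qed

lemma mat_diag_mult_vec:
  assumes y: "y \<in> carrier_vec n"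
  shows "mat_diag n d *\<^sub>v y = vec n (\<lambda>i. d i * y $ i)"
proof (rule eq_vecI)
  fix i assume "i < dim_vec (vec n (\<lambda>i. d i * y $ i))"
  hence i: "i < n" by simp
  have "(mat_diag n d *\<^sub>v y) $ i = (\<Sum>k\<in>{0..<n}. (if i = k then d k else 0) * y $ k)"
    using i y by (simp add: mat_diag_def scalar_prod_def)
  also have "\<dots> = (\<Sum>k\<in>{0..<n}. if k = i then d k * y $ k else 0)" by (rule sum.cong) auto
  finally show "(mat_diag n d *\<^sub>v y) $ i = vec n (\<lambda>i. d i * y $ i) $ i" using i by simp
qed (use y in \<open>auto simp: mat_diag_def\<close>)

lemma quadratic_form_orthogonal_diagonalization:
  fixes M W :: "real mat"
  assumes M: "M \<in> carrier_mat n n" and W: "W \<in> carrier_mat n n" and WTW: "W\<^sup>T * W = 1\<^sub>m n"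
    and MW: "M * W = W * mat_diag n d" and x: "x \<in> carrier_vec n"
  shows "x \<bullet> (M *\<^sub>v x) = (\<Sum>i<n. d i * (col W i \<bullet> x)\<^sup>2)" and "x \<bullet> x = (\<Sum>i<n. (col W i \<bullet> x)\<^sup>2)"
proof -
  have WT: "W\<^sup>T \<in> carrier_mat n n" using W by auto
  have WWT: "W * W\<^sup>T = 1\<^sub>m n" using mat_mult_left_right_inverse[OF WT W WTW] .
  define y where "y = W\<^sup>T *\<^sub>v x"
  have y: "y \<in> carrier_vec n" unfolding y_def using W x by auto
  have y_coords: "y $ i = col W i \<bullet> x" if "i < n" for i using that W x unfolding y_def by auto
  have xWy: "x = W *\<^sub>v y" unfolding y_def using W WT x WWT
    by (metis assoc_mult_mat_vec one_mult_mat_vec)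
  have "M *\<^sub>v x = (M * W) *\<^sub>v y" unfolding xWy using assoc_mult_mat_vec[OF M W y] ..
  hence "x \<bullet> (M *\<^sub>v x) = x \<bullet> (W *\<^sub>v (mat_diag n d *\<^sub>v y))"
    unfolding MW using assoc_mult_mat_vec[OF W _ y, of "mat_diag n d"] by simp
  also have "\<dots> = y \<bullet> (mat_diag n d *\<^sub>v y)"
    using transpose_vec_mult_scalar[OF W mult_mat_vec_carrier[OF mat_diag_dim y] x]
    unfolding y_def by simp
  also have "\<dots> = (\<Sum>i<n. d i * (y $ i)\<^sup>2)"
    using y by (auto simp: mat_diag_mult_vec scalar_prod_def atLeast0LessThan power2_eq_square
        ac_simps intro!: sum.cong)
  finally show "x \<bullet> (M *\<^sub>v x) = (\<Sum>i<n. d i * (col W i \<bullet> x)\<^sup>2)" by (simp add: y_coords)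
  have "x \<bullet> x = y \<bullet> y"
    using transpose_vec_mult_scalar[OF W y x] xWy unfolding y_def by auto
  thus "x \<bullet> x = (\<Sum>i<n. (col W i \<bullet> x)\<^sup>2)"
    unfolding scalar_prod_self_eq_sum_squares[OF y] by (simp add: y_coords)
qed

lemma symmetric_orthonormal_eigenbasis:
  fixes M :: "real mat"
  assumes M: "M \<in> carrier_mat n n" and sym: "M\<^sup>T = M"
  obtains d :: "nat \<Rightarrow> real" and v :: "nat \<Rightarrow> real vec"
  where "char_poly M = (\<Prod>i\<leftarrow>[0..<n]. [:- d i, 1:])"
    and "\<And>i. i < n \<Longrightarrow> v i \<in> carrier_vec n"
    and "\<And>i. i < n \<Longrightarrow> M *\<^sub>v v i = d i \<cdot>\<^sub>v v i"
    and "\<And>i j. i < n \<Longrightarrow> j < n \<Longrightarrow> v i \<bullet> v j = (if i = j then 1 else 0)"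
    and "\<And>x. x \<in> carrier_vec n \<Longrightarrow> x \<bullet> (M *\<^sub>v x) = (\<Sum>i<n. d i * (v i \<bullet> x)\<^sup>2)"
    and "\<And>x. x \<in> carrier_vec n \<Longrightarrow> x \<bullet> x = (\<Sum>i<n. (v i \<bullet> x)\<^sup>2)"
proof -
  obtain W d where W: "W \<in> carrier_mat n n" and WTW: "W\<^sup>T * W = 1\<^sub>m n"
    and D: "W\<^sup>T * M * W = mat_diag n d"
    using symmetric_orthogonal_diagonalization[OF M sym] by blast
  have WT: "W\<^sup>T \<in> carrier_mat n n" using W by auto
  have WWT: "W * W\<^sup>T = 1\<^sub>m n" using mat_mult_left_right_inverse[OF WT W WTW] .
  have MW: "M * W = W * mat_diag n d"
  proof -
    have "W * mat_diag n d = (W * W\<^sup>T) * (M * W)"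
      unfolding D[symmetric] using W WT M by (simp add: assoc_mult_mat[of _ n n _ n _ n])
    thus ?thesis unfolding WWT using M W by simp
  qed
  have "M = W * mat_diag n d * W\<^sup>T"
    using M W WT WWT by (metis MW assoc_mult_mat right_mult_one_mat)
  hence "similar_mat M (mat_diag n d)"
    unfolding similar_mat_def similar_mat_wit_def Let_def
    using M W WT WWT WTW by (intro exI[of _ W] exI[of _ "W\<^sup>T"]) auto
  hence cp: "char_poly M = (\<Prod>i\<leftarrow>[0..<n]. [:- d i, 1:])"
    using char_poly_similar char_poly_mat_diag by metis
  define v where "v = col W"
  have v: "v i \<in> carrier_vec n" if "i < n" for i using that W unfolding v_def by auto
  have ev: "M *\<^sub>v v i = d i \<cdot>\<^sub>v v i" if i: "i < n" for i
  proof -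
    have "M *\<^sub>v v i = col (W * mat_diag n d) i"
      unfolding v_def MW[symmetric] by (rule col_mult2[OF M W i, symmetric])
    also have "\<dots> = d i \<cdot>\<^sub>v v i"
      using W i by (auto simp: v_def mat_diag_mult_right[OF W] intro!: eq_vecI)
    finally show ?thesis .
  qed
  have on: "v i \<bullet> v j = (if i = j then 1 else 0)" if "i < n" and "j < n" for i j
    using that W WTW unfolding v_def by (metis WT carrier_matD index_mult_mat(1) index_one_mat(1)
      index_transpose_mat(3) row_transpose)
  note quad = quadratic_form_orthogonal_diagonalization[OF M W WTW MW, folded v_def]
  show thesis by (rule that[OF cp v ev on quad])
qed

section \<open>Bounding eigenvalues by quadratic forms\<close>

lemma poly_prod_linear_factors_eq_0_iff:
  "poly (\<Prod>x\<leftarrow>l. [:- x, 1:]) (a :: 'a :: idom) = 0 \<longleftrightarrow> a \<in> set l"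
  by (induction l) (auto simp: poly_prod_list)

lemma order_prod_linear_factors:
  "Polynomial.order a (\<Prod>x\<leftarrow>l. [:- x, 1:]) = count (mset l) (a :: 'a :: idom)"
proof (induction l)
  case Nil
  show ?case by (simp add: order_1_eq_0)
next
  case (Cons x l)
  have "[:- x, 1:] * (\<Prod>x\<leftarrow>l. [:- x, 1:]) \<noteq> (0 :: 'a poly)"
    using prod_list_zero_iff[of "map (\<lambda>x. [:- x, 1:]) (x # l)"] by auto
  hence "Polynomial.order a ([:- x, 1:] * (\<Prod>x\<leftarrow>l. [:- x, 1:]))
      = Polynomial.order a [:- x, 1:] + Polynomial.order a (\<Prod>x\<leftarrow>l. [:- x, 1:])"
    by (rule order_mult)
  thus ?case using Cons by (simp add: order_linear')
qed

lemma mset_eq_if_prod_linear_factors_eq: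
  assumes "(\<Prod>x\<leftarrow>l1. [:- x, 1:]) = (\<Prod>x\<leftarrow>l2. [:- x, 1:] :: 'a :: idom poly)"
  shows "mset l1 = mset l2"
  by (rule multiset_eqI) (metis order_prod_linear_factors assms)

lemma eigenvalue_iff_mem_linear_factors:
  assumes "(M :: 'a :: field mat) \<in> carrier_mat n n" and "char_poly M = (\<Prod>a\<leftarrow>ls. [:- a, 1:])"
  shows "eigenvalue M e \<longleftrightarrow> e \<in> set ls"
  unfolding eigenvalue_root_char_poly[OF assms(1)] assms(2) poly_prod_linear_factors_eq_0_iff ..

lemma linear_factors_of_char_poly_agree:
  fixes M :: "real mat"
  assumes "char_poly M = (\<Prod>a\<leftarrow>ls. [:- a, 1:])"
    and "char_poly M = (\<Prod>i\<leftarrow>[0..<n]. [:- d i, 1:])"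
  shows "length (filter P ls) = card {i. i < n \<and> P (d i)}" and "set ls = d ` {..<n}"
proof -
  have "(\<Prod>x\<leftarrow>map d [0..<n]. [:- x, 1:]) = (\<Prod>a\<leftarrow>ls. [:- a, 1:])"
    using assms by (simp add: comp_def)
  hence m: "mset ls = mset (map d [0..<n])" by (metis mset_eq_if_prod_linear_factors_eq)
  have "length (filter P ls) = length (filter P (map d [0..<n]))"
    using m by (metis mset_filter size_mset)
  also have "\<dots> = card {i. i < n \<and> P (d i)}"
    by (auto simp: length_filter_conv_card intro!: arg_cong[where f = card])
  finally show "length (filter P ls) = card {i. i < n \<and> P (d i)}" .
  show "set ls = d ` {..<n}" using m by (metis atLeast0LessThan mset_eq_setD set_map set_upt)
qed

lemma eigenvector_rayleigh:
  fixes M :: "real mat"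
  assumes M: "M \<in> carrier_mat n n" and ev: "eigenvector M v e"
  shows "v \<bullet> (M *\<^sub>v v) = e * (v \<bullet> v)" and "v \<bullet> v > 0"
  using ev real_scalar_prod_self_pos[of v n] M unfolding eigenvector_def by auto

lemma eigenvalue_ge_if_quadratic_form_ge:
  fixes M :: "real mat"
  assumes M: "M \<in> carrier_mat n n" and "eigenvalue M e"
    and ge: "\<And>x. x \<in> carrier_vec n \<Longrightarrow> c * (x \<bullet> x) \<le> x \<bullet> (M *\<^sub>v x)"
  shows "c \<le> e"
proof -
  obtain v where v: "eigenvector M v e" using assms(2) unfolding eigenvalue_def by auto
  hence "v \<in> carrier_vec n" using M unfolding eigenvector_def by simp
  hence "c * (v \<bullet> v) \<le> e * (v \<bullet> v)" using ge eigenvector_rayleigh(1)[OF M v] by metis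
  thus ?thesis using eigenvector_rayleigh(2)[OF M v] by simp
qed

lemma abs_eigenvalue_le_if_quadratic_form_le:
  fixes M :: "real mat"
  assumes M: "M \<in> carrier_mat n n" and "eigenvalue M e"
    and le: "\<And>x. x \<in> carrier_vec n \<Longrightarrow> \<bar>x \<bullet> (M *\<^sub>v x)\<bar> \<le> c * (x \<bullet> x)"
  shows "\<bar>e\<bar> \<le> c"
proof -
  obtain v where v: "eigenvector M v e" using assms(2) unfolding eigenvalue_def by auto
  hence "v \<in> carrier_vec n" using M unfolding eigenvector_def by simp
  hence "\<bar>e\<bar> * (v \<bullet> v) \<le> c * (v \<bullet> v)"
    using le[OF \<open>v \<in> carrier_vec n\<close>] eigenvector_rayleigh[OF M v] by (simp add: abs_mult)
  thus ?thesis using eigenvector_rayleigh(2)[OF M v] by simp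
qed

lemma eigenvalue_gt_if_quadratic_form_gt:
  fixes M :: "real mat"
  assumes M: "M \<in> carrier_mat n n" and sym: "M\<^sup>T = M" and cp: "char_poly M = (\<Prod>a\<leftarrow>ls. [:- a, 1:])"
    and x: "x \<in> carrier_vec n" and gt: "c * (x \<bullet> x) < x \<bullet> (M *\<^sub>v x)"
  shows "\<exists>e\<in>set ls. c < e"
proof (rule ccontr)
  assume none_gt: "\<not> (\<exists>e\<in>set ls. c < e)"
  obtain d v where cpd: "char_poly M = (\<Prod>i\<leftarrow>[0..<n]. [:- d i, 1:])"
    and "\<And>i. i < n \<Longrightarrow> v i \<in> carrier_vec n"
    and "\<And>i. i < n \<Longrightarrow> M *\<^sub>v v i = d i \<cdot>\<^sub>v v i"
    and "\<And>i j. i < n \<Longrightarrow> j < n \<Longrightarrow> v i \<bullet> v j = (if i = j then 1 else 0)"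
    and quad: "\<And>x. x \<in> carrier_vec n \<Longrightarrow> x \<bullet> (M *\<^sub>v x) = (\<Sum>i<n. d i * (v i \<bullet> x)\<^sup>2)"
    and norm: "\<And>x. x \<in> carrier_vec n \<Longrightarrow> x \<bullet> x = (\<Sum>i<n. (v i \<bullet> x)\<^sup>2)"
    by (rule symmetric_orthonormal_eigenbasis[OF M sym], rule that)
  have "\<forall>i<n. d i \<le> c"
    using none_gt linear_factors_of_char_poly_agree(2)[OF cp cpd] by (auto simp: not_less)
  hence "x \<bullet> (M *\<^sub>v x) \<le> c * (x \<bullet> x)"
    unfolding quad[OF x] norm[OF x] sum_distrib_left by (intro sum_mono mult_right_mono) auto
  thus False using gt by simp
qed

lemma quadratic_form_orthonormal_eigenpair:
  fixes M :: "real mat"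
  assumes M: "M \<in> carrier_mat n n" and x: "x \<in> carrier_vec n" and y: "y \<in> carrier_vec n"
    and on: "x \<bullet> x = 1" "y \<bullet> y = 1" "x \<bullet> y = 0"
    and Mx: "M *\<^sub>v x = e \<cdot>\<^sub>v x" and My: "M *\<^sub>v y = f \<cdot>\<^sub>v y"
  shows "(a \<cdot>\<^sub>v x + b \<cdot>\<^sub>v y) \<bullet> (M *\<^sub>v (a \<cdot>\<^sub>v x + b \<cdot>\<^sub>v y)) = a\<^sup>2 * e + b\<^sup>2 * f"
    and "(a \<cdot>\<^sub>v x + b \<cdot>\<^sub>v y) \<bullet> (a \<cdot>\<^sub>v x + b \<cdot>\<^sub>v y) = a\<^sup>2 + b\<^sup>2"
proof -
  have yx: "y \<bullet> x = 0" using on(3) comm_scalar_prod[OF x y] by simp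
  have Mz: "M *\<^sub>v (a \<cdot>\<^sub>v x + b \<cdot>\<^sub>v y) = (a * e) \<cdot>\<^sub>v x + (b * f) \<cdot>\<^sub>v y"
    using x y Mx My by (simp add: mult_add_distrib_mat_vec[OF M] mult_mat_vec[OF M] smult_smult_assoc)
  show "(a \<cdot>\<^sub>v x + b \<cdot>\<^sub>v y) \<bullet> (M *\<^sub>v (a \<cdot>\<^sub>v x + b \<cdot>\<^sub>v y)) = a\<^sup>2 * e + b\<^sup>2 * f"
    unfolding Mz scalar_prod_lin_comb[OF x y] using on yx by (simp add: power2_eq_square)
  show "(a \<cdot>\<^sub>v x + b \<cdot>\<^sub>v y) \<bullet> (a \<cdot>\<^sub>v x + b \<cdot>\<^sub>v y) = a\<^sup>2 + b\<^sup>2"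
    unfolding scalar_prod_lin_comb[OF x y] using on yx by (simp add: power2_eq_square)
qed

lemma at_most_one_eigenvalue_gt_if_quadratic_form_le_on_hyperplane:
  fixes M :: "real mat"
  assumes M: "M \<in> carrier_mat n n" and sym: "M\<^sup>T = M" and cp: "char_poly M = (\<Prod>a\<leftarrow>ls. [:- a, 1:])"
    and u: "u \<in> carrier_vec n"
    and le: "\<And>x. x \<in> carrier_vec n \<Longrightarrow> u \<bullet> x = 0 \<Longrightarrow> x \<bullet> (M *\<^sub>v x) \<le> c * (x \<bullet> x)"
  shows "length (filter (\<lambda>e. c < e) ls) \<le> 1"
proof -
  obtain d v where cpd: "char_poly M = (\<Prod>i\<leftarrow>[0..<n]. [:- d i, 1:])"
    and v: "\<And>i. i < n \<Longrightarrow> v i \<in> carrier_vec n"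
    and ev: "\<And>i. i < n \<Longrightarrow> M *\<^sub>v v i = d i \<cdot>\<^sub>v v i"
    and on: "\<And>i j. i < n \<Longrightarrow> j < n \<Longrightarrow> v i \<bullet> v j = (if i = j then 1 else 0)"
    and "\<And>x. x \<in> carrier_vec n \<Longrightarrow> x \<bullet> (M *\<^sub>v x) = (\<Sum>i<n. d i * (v i \<bullet> x)\<^sup>2)"
    and "\<And>x. x \<in> carrier_vec n \<Longrightarrow> x \<bullet> x = (\<Sum>i<n. (v i \<bullet> x)\<^sup>2)"
    by (rule symmetric_orthonormal_eigenbasis[OF M sym], rule that)
  let ?S = "{i. i < n \<and> c < d i}"
  have "card ?S \<le> Suc 0"
  proof (rule card_le_Suc0_iff_eq[THEN iffD2], simp, intro ballI, rule ccontr)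
    fix i j assume "i \<in> ?S" "j \<in> ?S" "i \<noteq> j"
    hence i: "i < n" "c < d i" and j: "j < n" "c < d j" and ij: "i \<noteq> j" by auto
    txt \<open>A nonzero combination of the two eigenvectors that lies on the hyperplane has
      Rayleigh quotient greater than \<open>c\<close>.\<close>
    have no_comb: False if ab: "a \<noteq> 0 \<or> b \<noteq> 0" and z0: "u \<bullet> (a \<cdot>\<^sub>v v i + b \<cdot>\<^sub>v v j) = 0" for a b
    proof -
      have "v i \<bullet> v i = 1" "v j \<bullet> v j = 1" "v i \<bullet> v j = 0" using on i j ij by auto
      note pair = quadratic_form_orthonormal_eigenpair[OF M v[OF i(1)] v[OF j(1)] this
          ev[OF i(1)] ev[OF j(1)]]
      have "0 < a\<^sup>2 * (d i - c) + b\<^sup>2 * (d j - c)"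
        using ab i(2) j(2) by (auto intro: add_pos_nonneg add_nonneg_pos)
      hence "c * (a\<^sup>2 + b\<^sup>2) < a\<^sup>2 * d i + b\<^sup>2 * d j" by (simp add: algebra_simps)
      thus False using le[of "a \<cdot>\<^sub>v v i + b \<cdot>\<^sub>v v j"] z0 v[OF i(1)] v[OF j(1)] ij
        unfolding pair by simp
    qed
    show False
    proof (cases "u \<bullet> v i = 0")
      case True
      hence "u \<bullet> (1 \<cdot>\<^sub>v v i + 0 \<cdot>\<^sub>v v j) = 0"
        using u v[OF i(1)] v[OF j(1)] by (simp add: scalar_prod_add_distrib[of _ n])
      thus False using no_comb[of 1 0] by simp
    next
      case False
      have "u \<bullet> ((u \<bullet> v j) \<cdot>\<^sub>v v i + (- (u \<bullet> v i)) \<cdot>\<^sub>v v j) = 0"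
        using u v[OF i(1)] v[OF j(1)] by (simp add: scalar_prod_add_distrib[of _ n])
      thus False using no_comb[of "u \<bullet> v j" "- (u \<bullet> v i)"] False by simp
    qed
  qed
  thus ?thesis using linear_factors_of_char_poly_agree(1)[OF cp cpd] by simp
qed

lemma abs_mult_le_perron_weighted:
  fixes m a b p q :: real
  assumes m: "0 \<le> m" and p: "0 < p" and q: "0 < q"
  shows "\<bar>m * a * b\<bar> \<le> a\<^sup>2 / p * (m * q) / 2 + b\<^sup>2 / q * (m * p) / 2"
proof -
  have "0 \<le> (q * \<bar>a\<bar> - p * \<bar>b\<bar>)\<^sup>2" by simp
  hence "2 * (p * q) * (\<bar>a\<bar> * \<bar>b\<bar>) \<le> q\<^sup>2 * a\<^sup>2 + p\<^sup>2 * b\<^sup>2"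
    by (simp add: power2_eq_square algebra_simps abs_mult_self_eq)
  hence "\<bar>a\<bar> * \<bar>b\<bar> \<le> (q\<^sup>2 * a\<^sup>2 + p\<^sup>2 * b\<^sup>2) / (2 * (p * q))"
    using p q by (simp add: field_simps)
  also have "\<dots> = a\<^sup>2 / p * q / 2 + b\<^sup>2 / q * p / 2"
    using p q by (simp add: field_simps power2_eq_square)
  finally have "m * (\<bar>a\<bar> * \<bar>b\<bar>) \<le> m * (a\<^sup>2 / p * q / 2 + b\<^sup>2 / q * p / 2)"
    using m by (rule mult_left_mono)
  thus ?thesis using m by (simp add: abs_mult algebra_simps)
qed

lemma perron_weighted_double_sum:
  fixes M :: "real mat"
  assumes row: "\<And>i. i < n \<Longrightarrow> (\<Sum>j<n. M $$ (i,j) * p $ j) = \<sigma> * p $ i"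
    and p_pos: "\<And>i. i < n \<Longrightarrow> 0 < p $ i"
  shows "(\<Sum>i<n. \<Sum>j<n. (x $ i)\<^sup>2 / p $ i * (M $$ (i,j) * p $ j)) = \<sigma> * (\<Sum>i<n. (x $ i)\<^sup>2)"
proof -
  have "(\<Sum>j<n. (x $ i)\<^sup>2 / p $ i * (M $$ (i,j) * p $ j)) = \<sigma> * (x $ i)\<^sup>2" if i: "i < n" for i
  proof -
    have "(\<Sum>j<n. (x $ i)\<^sup>2 / p $ i * (M $$ (i,j) * p $ j))
        = (x $ i)\<^sup>2 / p $ i * (\<Sum>j<n. M $$ (i,j) * p $ j)"
      by (simp add: sum_distrib_left)
    thus ?thesis using row[OF i] p_pos[OF i] by simp
  qed
  thus ?thesis by (simp add: sum_distrib_left)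
qed

lemma abs_quadratic_form_le_perron_root:
  fixes M :: "real mat"
  assumes M: "M \<in> carrier_mat n n" and sym: "M\<^sup>T = M"
    and nonneg: "\<And>i j. i < n \<Longrightarrow> j < n \<Longrightarrow> 0 \<le> M $$ (i,j)"
    and p: "p \<in> carrier_vec n" and p_pos: "\<And>i. i < n \<Longrightarrow> 0 < p $ i"
    and Mp: "M *\<^sub>v p = \<sigma> \<cdot>\<^sub>v p" and x: "x \<in> carrier_vec n"
  shows "\<bar>x \<bullet> (M *\<^sub>v x)\<bar> \<le> \<sigma> * (x \<bullet> x)"
proof -
  have M_sym: "M $$ (i,j) = M $$ (j,i)" if "i < n" "j < n" for i j
    using that M sym by (metis carrier_matD index_transpose_mat(1))
  have row: "(\<Sum>j<n. M $$ (i,j) * p $ j) = \<sigma> * p $ i" if i: "i < n" for i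
  proof -
    have "(\<Sum>j<n. M $$ (i,j) * p $ j) = (M *\<^sub>v p) $ i"
      using i M p by (auto simp: scalar_prod_def atLeast0LessThan)
    thus ?thesis unfolding Mp using i p by simp
  qed
  txt \<open>Schur test: weight \<open>\<bar>x\<^sub>i x\<^sub>j\<bar>\<close> by the ratio \<open>p\<^sub>j / p\<^sub>i\<close> of Perron coordinates.\<close>
  have "\<bar>x \<bullet> (M *\<^sub>v x)\<bar> \<le> (\<Sum>i<n. \<Sum>j<n. \<bar>M $$ (i,j) * x $ i * x $ j\<bar>)"
    unfolding scalar_prod_eq_double_sum[OF M x]
    by (rule order_trans[OF sum_abs], rule sum_mono, rule sum_abs)
  also have "\<dots> \<le> (\<Sum>i<n. \<Sum>j<n. (x $ i)\<^sup>2 / p $ i * (M $$ (i,j) * p $ j) / 2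
      + (x $ j)\<^sup>2 / p $ j * (M $$ (i,j) * p $ i) / 2)"
    using nonneg p_pos by (intro sum_mono abs_mult_le_perron_weighted) auto
  also have "\<dots> = (\<Sum>i<n. \<Sum>j<n. (x $ i)\<^sup>2 / p $ i * (M $$ (i,j) * p $ j)) / 2
      + (\<Sum>i<n. \<Sum>j<n. (x $ j)\<^sup>2 / p $ j * (M $$ (i,j) * p $ i)) / 2"
    by (simp only: sum.distrib sum_divide_distrib)
  finally have bound: "\<bar>x \<bullet> (M *\<^sub>v x)\<bar>
      \<le> (\<Sum>i<n. \<Sum>j<n. (x $ i)\<^sup>2 / p $ i * (M $$ (i,j) * p $ j)) / 2
        + (\<Sum>i<n. \<Sum>j<n. (x $ j)\<^sup>2 / p $ j * (M $$ (i,j) * p $ i)) / 2" .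
  have "(\<Sum>i<n. \<Sum>j<n. (x $ j)\<^sup>2 / p $ j * (M $$ (i,j) * p $ i))
      = (\<Sum>j<n. \<Sum>i<n. (x $ j)\<^sup>2 / p $ j * (M $$ (j,i) * p $ i))"
    by (subst sum.swap) (intro sum.cong refl, metis M_sym lessThan_iff)
  note sum2 = this[unfolded perron_weighted_double_sum[OF row p_pos]]
  note sum1 = perron_weighted_double_sum[OF row p_pos]
  show ?thesis using bound sum1 sum2 unfolding scalar_prod_self_eq_sum_squares[OF x] by simp
qed

lemma eigenvalue_one_mat:
  assumes "eigenvalue (1\<^sub>m n :: 'a :: field mat) e"
  shows "e = 1"
proof -
  obtain v where v: "v \<in> carrier_vec n" "v \<noteq> 0\<^sub>v n" and "1\<^sub>m n *\<^sub>v v = e \<cdot>\<^sub>v v"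
    using assms unfolding eigenvalue_def eigenvector_def by auto
  hence ev: "v = e \<cdot>\<^sub>v v" using v by simp
  obtain i where "i < n" "v $ i \<noteq> 0" using v by (metis eq_vecI carrier_vecD index_zero_vec)
  moreover have "v $ i = e * v $ i" using arg_cong[OF ev, of "\<lambda>w. w $ i"] \<open>i < n\<close> v by simp
  ultimately show ?thesis by simp
qed

section \<open>Eigenvalue lists ordered by absolute value\<close>

lemma two_le_length_filter:
  assumes "a \<in> set l" and "b \<in> set l" and "a \<noteq> b" and "P a" and "P b"
  shows "2 \<le> length (filter P l)"
proof -
  have "card {a, b} \<le> card (set (filter P l))" using assms by (intro card_mono) auto
  also have "\<dots> \<le> length (filter P l)" by (rule card_length)
  finally show ?thesis using assms(3) by simp
qed

lemma abs_sorted_second: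
  assumes sorted: "sorted_wrt (\<lambda>x y. \<bar>x\<bar> \<ge> \<bar>y\<bar>) (l :: real list)"
    and gt: "length (filter (\<lambda>x. c < \<bar>x\<bar>) l) \<le> 1"
    and ge: "2 \<le> length (filter (\<lambda>x. c \<le> \<bar>x\<bar>) l)"
  shows "\<bar>l ! 1\<bar> = c"
proof -
  have "2 \<le> length l" using ge length_filter_le[of "\<lambda>x. c \<le> \<bar>x\<bar>" l] by linarith
  then obtain a b rest where l: "l = a # b # rest" by (cases l; cases "tl l") auto
  have ab: "\<bar>b\<bar> \<le> \<bar>a\<bar>" and b_rest: "\<forall>y\<in>set rest. \<bar>y\<bar> \<le> \<bar>b\<bar>" using sorted unfolding l by auto
  show ?thesis
  proof (rule ccontr)
    assume "\<bar>l ! 1\<bar> \<noteq> c"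
    hence "c < \<bar>b\<bar> \<or> \<bar>b\<bar> < c" unfolding l by auto
    thus False
    proof
      assume "c < \<bar>b\<bar>"
      hence "2 \<le> length (filter (\<lambda>x. c < \<bar>x\<bar>) l)" using ab unfolding l by simp
      thus False using gt by simp
    next
      assume "\<bar>b\<bar> < c"
      hence "filter (\<lambda>x. c \<le> \<bar>x\<bar>) l = filter (\<lambda>x. c \<le> \<bar>x\<bar>) [a]"
        using b_rest unfolding l by (auto simp: filter_empty_conv)
      thus False using ge by (simp split: if_splits)
    qed
  qed
qed

lemma prod_list_map_cong_mset:
  "mset l1 = mset l2 \<Longrightarrow> (\<Prod>a\<leftarrow>l1. f a) = (\<Prod>a\<leftarrow>l2. f a :: 'b :: comm_monoid_mult)"
  by (metis mset_map prod_mset_prod_list)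

lemma symmetric_abs_sorted_eigenvalues_exist:
  fixes M :: "real mat"
  assumes M: "M \<in> carrier_mat n n" and sym: "M\<^sup>T = M"
  shows "\<exists>ls. abs_sorted_eigenvalues M ls"
proof -
  obtain d v where cp: "char_poly M = (\<Prod>i\<leftarrow>[0..<n]. [:- d i, 1:])"
    and "\<And>i. i < n \<Longrightarrow> v i \<in> carrier_vec n"
    and "\<And>i. i < n \<Longrightarrow> M *\<^sub>v v i = d i \<cdot>\<^sub>v v i"
    and "\<And>i j. i < n \<Longrightarrow> j < n \<Longrightarrow> v i \<bullet> v j = (if i = j then 1 else 0)"
    and "\<And>x. x \<in> carrier_vec n \<Longrightarrow> x \<bullet> (M *\<^sub>v x) = (\<Sum>i<n. d i * (v i \<bullet> x)\<^sup>2)"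
    and "\<And>x. x \<in> carrier_vec n \<Longrightarrow> x \<bullet> x = (\<Sum>i<n. (v i \<bullet> x)\<^sup>2)"
    by (rule symmetric_orthonormal_eigenbasis[OF M sym], rule that)
  define ls where "ls = sort_key (\<lambda>x. - \<bar>x\<bar>) (map d [0..<n])"
  have "char_poly M = (\<Prod>a\<leftarrow>map d [0..<n]. [:- a, 1:])" unfolding cp by (simp add: comp_def)
  also have "\<dots> = (\<Prod>a\<leftarrow>ls. [:- a, 1:])"
    by (rule prod_list_map_cong_mset) (simp add: ls_def)
  finally have "char_poly M = (\<Prod>a\<leftarrow>ls. [:- a, 1:])" .
  moreover have "sorted_wrt (\<lambda>x y. \<bar>x\<bar> \<ge> \<bar>y\<bar>) ls"
    using sorted_sort_key[of "\<lambda>x. - \<bar>x\<bar>" "map d [0..<n]"] unfolding ls_def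
    by (simp add: sorted_wrt_map)
  ultimately show ?thesis
    using M unfolding abs_sorted_eigenvalues_def by (intro exI[of _ ls]) (simp add: ls_def)
qed

lemma abs_sorted_eigenvalues_choose_second:
  assumes l: "abs_sorted_eigenvalues M l" and len: "2 \<le> length l"
    and c: "c \<in> set l" and abs_eq: "\<bar>l ! 1\<bar> = \<bar>c\<bar>"
  shows "\<exists>l'. abs_sorted_eigenvalues M l' \<and> l' ! 1 = c"
proof -
  obtain k where k: "k < length l" "l ! k = c" using c by (auto simp: in_set_conv_nth)
  define l' where "l' = l[k := l ! 1, 1 := l ! k]"
  have m: "mset l' = mset l" unfolding l'_def by (rule mset_swap) (use k len in auto)
  have "map abs l' = map abs l"
    by (rule nth_equalityI) (use k len abs_eq in \<open>auto simp: l'_def nth_list_update\<close>)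
  moreover have "sorted_wrt (\<lambda>a b. a \<ge> b) (map abs l)"
    using l unfolding abs_sorted_eigenvalues_def sorted_wrt_map by simp
  ultimately have "sorted_wrt (\<lambda>a b. a \<ge> b) (map abs l')" by (simp only:)
  hence "sorted_wrt (\<lambda>x y. \<bar>x\<bar> \<ge> \<bar>y\<bar>) l'" unfolding sorted_wrt_map .
  moreover have "char_poly M = (\<Prod>a\<leftarrow>l'. [:- a, 1:])"
    using l prod_list_map_cong_mset[OF m, of "\<lambda>a. [:- a, 1:]"] unfolding abs_sorted_eigenvalues_def by simp
  moreover have "length l' = dim_row M" using l unfolding abs_sorted_eigenvalues_def l'_def by simp
  moreover have "l' ! 1 = c" unfolding l'_def using k len by simp
  ultimately show ?thesis unfolding abs_sorted_eigenvalues_def by blast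
qed

lemma eigenvalue_iff_mem_abs_sorted_eigenvalues:
  assumes "M \<in> carrier_mat n n" and "abs_sorted_eigenvalues M ls"
  shows "eigenvalue M e \<longleftrightarrow> e \<in> set ls"
  using assms eigenvalue_iff_mem_linear_factors unfolding abs_sorted_eigenvalues_def by blast

lemma symmetric_abs_sorted_eigenvalues_with_second:
  fixes M :: "real mat"
  assumes M: "M \<in> carrier_mat n n" and sym: "M\<^sup>T = M" and n: "2 \<le> n" and c: "eigenvalue M c"
    and second: "\<And>l. abs_sorted_eigenvalues M l \<Longrightarrow> \<bar>l ! 1\<bar> = \<bar>c\<bar>"
  shows "\<exists>l. abs_sorted_eigenvalues M l \<and> l ! 1 = c"
proof -
  obtain l where l: "abs_sorted_eigenvalues M l"
    using symmetric_abs_sorted_eigenvalues_exist[OF M sym] ..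
  have "2 \<le> length l" using l M n unfolding abs_sorted_eigenvalues_def by simp
  moreover have "c \<in> set l" using c eigenvalue_iff_mem_abs_sorted_eigenvalues[OF M l] by simp
  ultimately show ?thesis by (rule abs_sorted_eigenvalues_choose_second[OF l _ _ second[OF l]])
qed

section \<open>The band matrix and its complement\<close>

definition theta :: "nat \<Rightarrow> real" where
  "theta s = pi / (4 * real s + 2)"

definition sigma :: "nat \<Rightarrow> real" where
  "sigma s = 1 / (2 * sin (theta s))"

definition cos_node :: "nat \<Rightarrow> nat \<Rightarrow> real" where
  "cos_node s k = cos ((2 * real k + 1) * theta s)"

lemma sin_mult_sum_cos_odd:
  "2 * sin t * (\<Sum>k<m. cos ((2 * real k + 1) * t)) = sin (2 * real m * t)"
proof (induction m)
  case 0
  show ?case by simp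
next
  case (Suc m)
  define x where "x = (2 * real m + 1) * t"
  have "2 * sin t * (\<Sum>k<Suc m. cos ((2 * real k + 1) * t)) = sin (2 * real m * t) + 2 * sin t * cos x"
    using Suc by (simp add: algebra_simps x_def)
  also have "\<dots> = sin (x - t) + 2 * sin t * cos x"
    unfolding x_def by (simp add: algebra_simps)
  also have "\<dots> = sin (x + t)" unfolding sin_add sin_diff by (simp add: algebra_simps)
  finally show ?case unfolding x_def by (simp add: algebra_simps)
qed

lemma theta_pos: "0 < theta s"
  unfolding theta_def by simp

lemma odd_mult_theta: "(2 * real s + 1) * theta s = pi / 2"
  unfolding theta_def by (simp add: field_simps)

lemma sin_theta_pos: "0 < sin (theta s)"
proof -
  have "theta s \<le> pi / 2" unfolding theta_def by (rule divide_left_mono) auto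
  hence "theta s < pi" using pi_gt_zero by linarith
  thus ?thesis using theta_pos by (simp add: sin_gt_zero)
qed

lemma sigma_pos: "0 < sigma s"
  unfolding sigma_def using sin_theta_pos by simp

lemma sigma_one: "sigma 1 = 1"
proof -
  have "theta 1 = pi / 6" unfolding theta_def by simp
  hence "sin (theta 1) = 1 / 2" using sin_30 by (simp only:)
  thus ?thesis unfolding sigma_def by simp
qed

lemma cos_node_pos: "k < s \<Longrightarrow> 0 < cos_node s k"
proof -
  assume "k < s"
  hence "(2 * real k + 1) * theta s < (2 * real s + 1) * theta s"
    using theta_pos by (intro mult_strict_right_mono) auto
  moreover have "0 < (2 * real k + 1) * theta s" using theta_pos by simp
  ultimately show ?thesis unfolding cos_node_def odd_mult_theta
    using pi_gt_zero by (intro cos_gt_zero_pi) linarith+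
qed

text \<open>Telescoping: \<open>2 sin \<theta> \<cdot> (\<Sum>k<m. cos ((2k + 1) \<theta>)) = sin (2m \<theta>)\<close>, and
  \<open>sin (2m \<theta>) = cos ((2(s - m) + 1) \<theta>)\<close> because \<open>(2s + 1) \<theta> = \<pi> / 2\<close>.\<close>
lemma sum_cos_node:
  assumes "1 \<le> m" and "m \<le> s"
  shows "(\<Sum>k<m. cos_node s k) = sigma s * cos_node s (s - m)"
proof -
  have "2 * sin (theta s) * (\<Sum>k<m. cos_node s k) = sin (2 * real m * theta s)"
    unfolding cos_node_def by (rule sin_mult_sum_cos_odd)
  also have "\<dots> = cos (pi / 2 - 2 * real m * theta s)" by (simp add: cos_sin_eq)
  also have "pi / 2 - 2 * real m * theta s = (2 * real (s - m) + 1) * theta s"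
    using odd_mult_theta[of s] assms by (simp add: of_nat_diff algebra_simps)
  finally show ?thesis
    unfolding sigma_def cos_node_def using sin_theta_pos[of s] by (simp add: field_simps)
qed

definition far :: "nat \<Rightarrow> nat \<Rightarrow> nat \<Rightarrow> bool" where
  "far s i j \<longleftrightarrow> i + s \<le> j \<or> j + s \<le> i"

definition ones_vec :: "nat \<Rightarrow> real vec" where
  "ones_vec n = vec n (\<lambda>_. 1)"

text \<open>For \<open>\<epsilon> = 1\<close> the Perron vector of \<open>B\<close>, for \<open>\<epsilon> = -1\<close> the common eigenvector of \<open>A\<close>
  and \<open>B\<close>.\<close>
definition mirror_vec :: "nat \<Rightarrow> real \<Rightarrow> real vec" where
  "mirror_vec s \<epsilon> = vec (2*s) (\<lambda>i. if i < s then cos_node s i else \<epsilon> * cos_node s (2*s - 1 - i))"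

lemma bandA_carrier [simp]: "bandA s \<in> carrier_mat (2*s) (2*s)"
  unfolding bandA_def by auto

lemma compB_carrier [simp]: "compB s \<in> carrier_mat (2*s) (2*s)"
  unfolding compB_def ones_mat_def by (intro minus_carrier_mat) auto

lemma bandA_dims [simp]: "dim_row (bandA s) = 2*s" "dim_col (bandA s) = 2*s"
  unfolding bandA_def by simp_all

lemma compB_dims [simp]: "dim_row (compB s) = 2*s" "dim_col (compB s) = 2*s"
  unfolding compB_def ones_mat_def by simp_all

lemma ones_mat_carrier [simp]: "ones_mat n \<in> carrier_mat n n"
  unfolding ones_mat_def by simp

lemma ones_mat_dims [simp]: "dim_row (ones_mat n) = n" "dim_col (ones_mat n) = n"
  unfolding ones_mat_def by simp_all

lemma ones_vec_carrier [simp]: "ones_vec n \<in> carrier_vec n"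
  unfolding ones_vec_def by simp

lemma mirror_vec_carrier [simp]: "mirror_vec s \<epsilon> \<in> carrier_vec (2*s)"
  unfolding mirror_vec_def by simp

lemma mirror_vec_dim [simp]: "dim_vec (mirror_vec s \<epsilon>) = 2*s"
  unfolding mirror_vec_def by simp

lemma bandA_index: "i < 2*s \<Longrightarrow> j < 2*s \<Longrightarrow> bandA s $$ (i,j) = (if far s i j then 0 else 1)"
  unfolding bandA_def far_def by auto

lemma compB_index: "i < 2*s \<Longrightarrow> j < 2*s \<Longrightarrow> compB s $$ (i,j) = (if far s i j then 1 else 0)"
  unfolding compB_def ones_mat_def using bandA_index[of i s j] by simp

lemma far_commute: "far s i j = far s j i"
  unfolding far_def by auto

lemma far_lower: "i < s \<Longrightarrow> far s i j \<longleftrightarrow> i + s \<le> j"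
  unfolding far_def by auto

lemma far_upper: "s \<le> i \<Longrightarrow> j < 2*s \<Longrightarrow> far s i j \<longleftrightarrow> j < i - s + 1"
  unfolding far_def by auto

lemma bandA_symmetric: "(bandA s)\<^sup>T = bandA s"
  by (rule eq_matI) (auto simp: bandA_index far_commute)

lemma compB_symmetric: "(compB s)\<^sup>T = compB s"
  by (rule eq_matI) (auto simp: compB_index far_commute)

lemma bandA_eq_ones_minus_compB: "bandA s = ones_mat (2*s) - compB s"
  by (rule eq_matI) (auto simp: bandA_index compB_index ones_mat_def)

lemma bandA_one: "bandA 1 = 1\<^sub>m 2"
  by (rule eq_matI) (auto simp: bandA_index far_def)

lemma ones_vec_scalar_prod: "x \<in> carrier_vec n \<Longrightarrow> ones_vec n \<bullet> x = (\<Sum>i<n. x $ i)"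
  by (auto simp: ones_vec_def scalar_prod_def atLeast0LessThan)

lemma ones_vec_self_scalar_prod: "ones_vec n \<bullet> ones_vec n = real n"
  by (simp add: ones_vec_def scalar_prod_def)

lemma ones_mat_mult_vec: "x \<in> carrier_vec n \<Longrightarrow> ones_mat n *\<^sub>v x = (ones_vec n \<bullet> x) \<cdot>\<^sub>v ones_vec n"
  by (rule eq_vecI) (auto simp: ones_mat_def ones_vec_def scalar_prod_def)

lemma compB_mult_vec_index:
  assumes "i < 2*s" and "v \<in> carrier_vec (2*s)"
  shows "(compB s *\<^sub>v v) $ i = (\<Sum>j<2*s. if far s i j then v $ j else 0)"
  using assms by (auto simp: scalar_prod_def atLeast0LessThan compB_index intro!: sum.cong)

lemma sum_lessThan_if_less:
  fixes c N :: nat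
  assumes "c \<le> N"
  shows "(\<Sum>j<N. if j < c then g j else 0) = (\<Sum>k<c. g k :: 'a :: comm_monoid_add)"
proof -
  have "(\<Sum>j<N. if j < c then g j else 0) = (\<Sum>j<N. if j \<in> {..<c} then g j else 0)" by simp
  also have "\<dots> = sum g ({..<N} \<inter> {..<c})" by (subst sum.inter_restrict) auto
  also have "{..<N} \<inter> {..<c} = {..<c}" using assms by auto
  finally show ?thesis .
qed

lemma sum_lessThan_if_ge_reflect:
  fixes c N :: nat
  assumes "c \<le> N"
  shows "(\<Sum>j<N. if c \<le> j then g (N - 1 - j) else 0) = (\<Sum>k<N - c. g k :: 'a :: comm_monoid_add)"
proof -
  have "(\<Sum>j<N. if c \<le> j then g (N - 1 - j) else 0) = (\<Sum>j<N. if j \<in> {c..<N} then g (N - 1 - j) else 0)"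
    by (rule sum.cong) auto
  also have "\<dots> = sum (\<lambda>j. g (N - 1 - j)) ({..<N} \<inter> {c..<N})" by (subst sum.inter_restrict) auto
  also have "{..<N} \<inter> {c..<N} = {c..<N}" by auto
  also have "sum (\<lambda>j. g (N - 1 - j)) {c..<N} = (\<Sum>k<N - c. g k)"
    by (rule sum.reindex_bij_witness[of _ "\<lambda>k. N - 1 - k" "\<lambda>j. N - 1 - j"]) auto
  finally show ?thesis .
qed

lemma compB_mirror_vec:
  assumes \<epsilon>: "\<epsilon>\<^sup>2 = 1"
  shows "compB s *\<^sub>v mirror_vec s \<epsilon> = (\<epsilon> * sigma s) \<cdot>\<^sub>v mirror_vec s \<epsilon>"
proof (rule eq_vecI)
  fix i assume "i < dim_vec ((\<epsilon> * sigma s) \<cdot>\<^sub>v mirror_vec s \<epsilon>)"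
  hence i: "i < 2*s" by (simp add: mirror_vec_def)
  show "(compB s *\<^sub>v mirror_vec s \<epsilon>) $ i = ((\<epsilon> * sigma s) \<cdot>\<^sub>v mirror_vec s \<epsilon>) $ i"
  proof (cases "i < s")
    case True
    have "(compB s *\<^sub>v mirror_vec s \<epsilon>) $ i
        = (\<Sum>j<2*s. if i + s \<le> j then \<epsilon> * cos_node s (2*s - 1 - j) else 0)"
      unfolding compB_mult_vec_index[OF i mirror_vec_carrier] using True
      by (intro sum.cong) (auto simp: far_lower mirror_vec_def)
    also have "\<dots> = (\<Sum>k<2*s - (i+s). \<epsilon> * cos_node s k)"
      by (rule sum_lessThan_if_ge_reflect) (use True in simp)
    also have "\<dots> = \<epsilon> * (sigma s * cos_node s (s - (2*s - (i+s))))"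
      unfolding sum_distrib_left[symmetric] using True by (subst sum_cos_node) auto
    also have "s - (2*s - (i+s)) = i" using True by simp
    finally show ?thesis using True i by (simp add: mirror_vec_def)
  next
    case False
    have "(compB s *\<^sub>v mirror_vec s \<epsilon>) $ i = (\<Sum>j<2*s. if j < i - s + 1 then cos_node s j else 0)"
      unfolding compB_mult_vec_index[OF i mirror_vec_carrier] using False i
      by (intro sum.cong) (auto simp: far_upper mirror_vec_def)
    also have "\<dots> = (\<Sum>k<i - s + 1. cos_node s k)"
      by (rule sum_lessThan_if_less) (use False i in simp)
    also have "\<dots> = sigma s * cos_node s (s - (i - s + 1))"
      by (rule sum_cos_node) (use False i in auto)
    also have "s - (i - s + 1) = 2*s - 1 - i" using False i by simp
    also have "sigma s * cos_node s (2*s - 1 - i) = (\<epsilon> * sigma s) * (\<epsilon> * cos_node s (2*s - 1 - i))"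
      using \<epsilon> by (simp add: power2_eq_square algebra_simps)
    finally show ?thesis using False i by (simp add: mirror_vec_def)
  qed
qed (simp add: mirror_vec_def)

lemma mirror_vec_pos: "i < 2*s \<Longrightarrow> 0 < mirror_vec s 1 $ i"
  unfolding mirror_vec_def by (auto intro!: cos_node_pos)

lemma mirror_vec_nonzero:
  assumes "1 \<le> s"
  shows "mirror_vec s \<epsilon> \<noteq> 0\<^sub>v (2*s)"
proof
  assume "mirror_vec s \<epsilon> = 0\<^sub>v (2*s)"
  hence "mirror_vec s \<epsilon> $ 0 = 0" using assms by simp
  moreover have "mirror_vec s \<epsilon> $ 0 = cos_node s 0" using assms by (simp add: mirror_vec_def)
  ultimately show False using cos_node_pos[of 0 s] assms by simp
qed

lemma ones_vec_scalar_prod_mirror_vec: "ones_vec (2*s) \<bullet> mirror_vec s (-1) = 0"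
proof -
  have "ones_vec (2*s) \<bullet> mirror_vec s (-1)
      = (\<Sum>j<2*s. if j < s then cos_node s j else 0) - (\<Sum>j<2*s. if s \<le> j then cos_node s (2*s - 1 - j) else 0)"
    unfolding ones_vec_scalar_prod[OF mirror_vec_carrier] sum_subtractf[symmetric]
    by (intro sum.cong) (auto simp: mirror_vec_def)
  also have "\<dots> = 0"
    using sum_lessThan_if_less[of s "2*s" "cos_node s"] sum_lessThan_if_ge_reflect[of s "2*s" "cos_node s"]
    by simp
  finally show ?thesis .
qed

lemma bandA_mirror_vec: "bandA s *\<^sub>v mirror_vec s (-1) = sigma s \<cdot>\<^sub>v mirror_vec s (-1)"
proof -
  have "bandA s *\<^sub>v mirror_vec s (-1) = ones_mat (2*s) *\<^sub>v mirror_vec s (-1) - compB s *\<^sub>v mirror_vec s (-1)"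
    unfolding bandA_eq_ones_minus_compB
    by (rule minus_mult_distrib_mat_vec) auto
  also have "\<dots> = 0 \<cdot>\<^sub>v ones_vec (2*s) - (- sigma s) \<cdot>\<^sub>v mirror_vec s (-1)"
    unfolding ones_mat_mult_vec[OF mirror_vec_carrier] ones_vec_scalar_prod_mirror_vec
      compB_mirror_vec[of "-1", simplified] ..
  also have "\<dots> = sigma s \<cdot>\<^sub>v mirror_vec s (-1)"
    by (rule eq_vecI) (auto simp: ones_vec_def mirror_vec_def)
  finally show ?thesis .
qed

lemma compB_row_sum:
  assumes j: "j < 2*s"
  shows "(compB s *\<^sub>v ones_vec (2*s)) $ j = (if j < s then real (s - j) else real (j - s + 1))"
proof (cases "j < s")
  case True
  have "(compB s *\<^sub>v ones_vec (2*s)) $ j = (\<Sum>i<2*s. if j + s \<le> i then (\<lambda>_. 1::real) (2*s - 1 - i) else 0)"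
    unfolding compB_mult_vec_index[OF j ones_vec_carrier] using True
    by (intro sum.cong) (auto simp: far_lower ones_vec_def)
  also have "\<dots> = (\<Sum>k<2*s - (j+s). 1)" by (rule sum_lessThan_if_ge_reflect) (use True in simp)
  finally show ?thesis using True by simp
next
  case False
  have "(compB s *\<^sub>v ones_vec (2*s)) $ j = (\<Sum>i<2*s. if i < j - s + 1 then 1 else 0)"
    unfolding compB_mult_vec_index[OF j ones_vec_carrier] using False j
    by (intro sum.cong) (auto simp: far_upper ones_vec_def)
  also have "\<dots> = (\<Sum>k<j - s + 1. 1)" by (rule sum_lessThan_if_less) (use False j in simp)
  finally show ?thesis using False by simp
qed

lemma compB_quadratic_form_le:
  assumes "x \<in> carrier_vec (2*s)"
  shows "\<bar>x \<bullet> (compB s *\<^sub>v x)\<bar> \<le> sigma s * (x \<bullet> x)"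
  using compB_mirror_vec[of 1 s] mirror_vec_pos assms
  by (intro abs_quadratic_form_le_perron_root[OF compB_carrier compB_symmetric _ mirror_vec_carrier])
    (auto simp: compB_index)

lemma bandA_quadratic_form:
  assumes x: "x \<in> carrier_vec (2*s)"
  shows "x \<bullet> (bandA s *\<^sub>v x) = (ones_vec (2*s) \<bullet> x)\<^sup>2 - x \<bullet> (compB s *\<^sub>v x)"
proof -
  have "bandA s *\<^sub>v x = ones_mat (2*s) *\<^sub>v x - compB s *\<^sub>v x"
    unfolding bandA_eq_ones_minus_compB using x
    by (intro minus_mult_distrib_mat_vec) auto
  hence "x \<bullet> (bandA s *\<^sub>v x) = x \<bullet> (ones_mat (2*s) *\<^sub>v x) - x \<bullet> (compB s *\<^sub>v x)"
    using scalar_prod_minus_distrib[OF x mult_mat_vec_carrier[OF ones_mat_carrier x]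
        mult_mat_vec_carrier[OF compB_carrier x]] by simp
  also have "x \<bullet> (ones_mat (2*s) *\<^sub>v x) = (ones_vec (2*s) \<bullet> x)\<^sup>2"
    unfolding ones_mat_mult_vec[OF x] using x
    by (simp add: comm_scalar_prod[of x "2*s" "ones_vec (2*s)"] power2_eq_square)
  finally show ?thesis .
qed

lemma sigma_less:
  assumes s: "2 \<le> s"
  shows "sigma s < real s"
proof -
  let ?p = "mirror_vec s 1" and ?o = "ones_vec (2*s)" and ?r = "compB s *\<^sub>v ones_vec (2*s)"
  have r: "?r $ j \<le> real s" if "j < 2*s" for j using compB_row_sum[OF that] that by auto
  have "sigma s * (?o \<bullet> ?p) = ?o \<bullet> (compB s *\<^sub>v ?p)"
    using compB_mirror_vec[of 1 s] scalar_prod_smult_distrib[OF ones_vec_carrier mirror_vec_carrier] by simp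
  also have "\<dots> = ?r \<bullet> ?p"
    using transpose_vec_mult_scalar[OF compB_carrier mirror_vec_carrier ones_vec_carrier]
    unfolding compB_symmetric by simp
  also have "\<dots> = (\<Sum>j<2*s. ?r $ j * ?p $ j)"
    by (simp add: scalar_prod_def atLeast0LessThan del: index_mult_mat_vec)
  also have "\<dots> < (\<Sum>j<2*s. real s * ?p $ j)"
  proof (rule sum_strict_mono_ex1)
    show "\<forall>j\<in>{..<2*s}. ?r $ j * ?p $ j \<le> real s * ?p $ j"
      using r mirror_vec_pos by (auto intro!: mult_right_mono less_imp_le)
    show "\<exists>j\<in>{..<2*s}. ?r $ j * ?p $ j < real s * ?p $ j"
      using s compB_row_sum[of 1 s] mirror_vec_pos[of 1 s] by (intro bexI[of _ 1]) auto
  qed simp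
  also have "\<dots> = real s * (?o \<bullet> ?p)"
    by (simp add: ones_vec_scalar_prod sum_distrib_left)
  finally have "sigma s * (?o \<bullet> ?p) < real s * (?o \<bullet> ?p)" .
  moreover have "0 < ?o \<bullet> ?p"
    unfolding ones_vec_scalar_prod[OF mirror_vec_carrier] using s mirror_vec_pos
    by (intro sum_pos) (auto simp: lessThan_empty_iff)
  ultimately show ?thesis by simp
qed

lemma bandA_ones_vec_quadratic_form: "2 * real s * real s \<le> ones_vec (2*s) \<bullet> (bandA s *\<^sub>v ones_vec (2*s))"
proof -
  have "(compB s *\<^sub>v ones_vec (2*s)) $ j \<le> real s" if "j < 2*s" for j
    using compB_row_sum[OF that] that by auto
  hence "ones_vec (2*s) \<bullet> (compB s *\<^sub>v ones_vec (2*s)) \<le> (\<Sum>j<2*s. real s)"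
    unfolding ones_vec_scalar_prod[OF mult_mat_vec_carrier[OF compB_carrier ones_vec_carrier]]
    by (intro sum_mono) simp
  thus ?thesis
    unfolding bandA_quadratic_form[OF ones_vec_carrier] ones_vec_self_scalar_prod
    by (simp add: power2_eq_square)
qed

lemma compB_abs_eigenvalue_le: "eigenvalue (compB s) e \<Longrightarrow> \<bar>e\<bar> \<le> sigma s"
  using abs_eigenvalue_le_if_quadratic_form_le[OF compB_carrier _ compB_quadratic_form_le] .

lemma bandA_eigenvalue_ge: "eigenvalue (bandA s) e \<Longrightarrow> - sigma s \<le> e"
proof (rule eigenvalue_ge_if_quadratic_form_ge[OF bandA_carrier])
  fix x :: "real vec" assume x: "x \<in> carrier_vec (2*s)"
  have "x \<bullet> (compB s *\<^sub>v x) \<le> sigma s * (x \<bullet> x)"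
    using compB_quadratic_form_le[OF x] by (simp add: abs_le_iff)
  moreover have "0 \<le> (ones_vec (2*s) \<bullet> x)\<^sup>2" by simp
  ultimately show "- sigma s * (x \<bullet> x) \<le> x \<bullet> (bandA s *\<^sub>v x)"
    unfolding bandA_quadratic_form[OF x] by linarith
qed

lemma bandA_quadratic_form_le_on_ones_orthogonal:
  "x \<in> carrier_vec (2*s) \<Longrightarrow> ones_vec (2*s) \<bullet> x = 0 \<Longrightarrow> x \<bullet> (bandA s *\<^sub>v x) \<le> sigma s * (x \<bullet> x)"
  using bandA_quadratic_form[of x s] compB_quadratic_form_le[of x s] by (simp add: abs_le_iff)

lemma bandA_eigenvector_mirror_vec: "1 \<le> s \<Longrightarrow> eigenvector (bandA s) (mirror_vec s (-1)) (sigma s)"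
  unfolding eigenvector_def using bandA_mirror_vec mirror_vec_nonzero by simp

lemma compB_eigenvector_mirror_vec:
  "1 \<le> s \<Longrightarrow> \<epsilon>\<^sup>2 = 1 \<Longrightarrow> eigenvector (compB s) (mirror_vec s \<epsilon>) (\<epsilon> * sigma s)"
  unfolding eigenvector_def using compB_mirror_vec mirror_vec_nonzero by simp

lemma bandA_eigenvalue_gt_sigma:
  assumes s: "2 \<le> s" and cp: "char_poly (bandA s) = (\<Prod>a\<leftarrow>ls. [:- a, 1:])"
  shows "\<exists>e\<in>set ls. sigma s < e"
proof (rule eigenvalue_gt_if_quadratic_form_gt[OF bandA_carrier bandA_symmetric cp ones_vec_carrier])
  have "sigma s * (2 * real s) < real s * (2 * real s)"
    using sigma_less[OF s] s by (intro mult_strict_right_mono) auto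
  thus "sigma s * (ones_vec (2*s) \<bullet> ones_vec (2*s)) < ones_vec (2*s) \<bullet> (bandA s *\<^sub>v ones_vec (2*s))"
    using bandA_ones_vec_quadratic_form[of s] unfolding ones_vec_self_scalar_prod by simp
qed

lemma bandA_second_abs_eigenvalue:
  assumes s: "1 \<le> s" and ls: "abs_sorted_eigenvalues (bandA s) ls"
  shows "\<bar>ls ! 1\<bar> = sigma s"
proof -
  have len: "length ls = 2*s" and cp: "char_poly (bandA s) = (\<Prod>a\<leftarrow>ls. [:- a, 1:])"
    and sorted: "sorted_wrt (\<lambda>x y. \<bar>x\<bar> \<ge> \<bar>y\<bar>) ls"
    using ls unfolding abs_sorted_eigenvalues_def by auto
  note ev = eigenvalue_iff_mem_abs_sorted_eigenvalues[OF bandA_carrier ls]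
  have "sigma s < \<bar>e\<bar> \<longleftrightarrow> sigma s < e" if "e \<in> set ls" for e
    using bandA_eigenvalue_ge[of s e] ev[of e] that sigma_pos[of s] by auto
  hence "filter (\<lambda>e. sigma s < \<bar>e\<bar>) ls = filter (\<lambda>e. sigma s < e) ls"
    by (intro filter_cong) auto
  also have "length \<dots> \<le> 1"
    by (rule at_most_one_eigenvalue_gt_if_quadratic_form_le_on_hyperplane[OF bandA_carrier
          bandA_symmetric cp ones_vec_carrier bandA_quadratic_form_le_on_ones_orthogonal])
  finally have gt: "length (filter (\<lambda>e. sigma s < \<bar>e\<bar>) ls) \<le> 1" .
  have "2 \<le> length (filter (\<lambda>e. sigma s \<le> \<bar>e\<bar>) ls)"
  proof (cases "s = 1")
    case True
    have A: "bandA s = 1\<^sub>m 2" unfolding True by (rule bandA_one)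
    have \<sigma>: "sigma s = 1" unfolding True by (rule sigma_one)
    have "e = sigma s" if "e \<in> set ls" for e
    proof -
      have "eigenvalue (1\<^sub>m 2) e" using ev[of e] that unfolding A by simp
      thus ?thesis unfolding \<sigma> by (rule eigenvalue_one_mat)
    qed
    hence "filter (\<lambda>e. sigma s \<le> \<bar>e\<bar>) ls = ls" by (intro filter_True) auto
    thus ?thesis using len True by simp
  next
    case False
    then obtain e where "e \<in> set ls" "sigma s < e"
      using bandA_eigenvalue_gt_sigma[OF _ cp] s by force
    moreover have "sigma s \<in> set ls" using ev bandA_eigenvector_mirror_vec[OF s] unfolding eigenvalue_def by blast
    ultimately show ?thesis using sigma_pos[of s] by (intro two_le_length_filter[of e _ "sigma s"]) auto
  qed
  with sorted gt show ?thesis by (rule abs_sorted_second)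
qed

lemma compB_second_abs_eigenvalue:
  assumes s: "1 \<le> s" and gs: "abs_sorted_eigenvalues (compB s) gs"
  shows "\<bar>gs ! 1\<bar> = sigma s"
proof -
  have sorted: "sorted_wrt (\<lambda>x y. \<bar>x\<bar> \<ge> \<bar>y\<bar>) gs" using gs unfolding abs_sorted_eigenvalues_def by auto
  note ev = eigenvalue_iff_mem_abs_sorted_eigenvalues[OF compB_carrier gs]
  have "filter (\<lambda>e. sigma s < \<bar>e\<bar>) gs = []"
    using compB_abs_eigenvalue_le ev by (force simp: filter_empty_conv)
  hence "length (filter (\<lambda>e. sigma s < \<bar>e\<bar>) gs) \<le> 1" by simp
  moreover have "sigma s \<in> set gs" and "- sigma s \<in> set gs"
    using ev compB_eigenvector_mirror_vec[OF s, of 1] compB_eigenvector_mirror_vec[OF s, of "-1"]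
    unfolding eigenvalue_def by auto
  hence "2 \<le> length (filter (\<lambda>e. sigma s \<le> \<bar>e\<bar>) gs)"
    using sigma_pos[of s] by (intro two_le_length_filter[of "sigma s" _ "- sigma s"]) auto
  ultimately show ?thesis using sorted abs_sorted_second by blast
qed

theorem theorem9:
  fixes s :: nat
  assumes "s \<ge> 1"
  shows "(\<forall>ls gs. abs_sorted_eigenvalues (bandA s) ls \<and> abs_sorted_eigenvalues (compB s) gs
            \<longrightarrow> \<bar>ls ! 1\<bar> = \<bar>gs ! 1\<bar>)
       \<and> (\<exists>ls gs v. abs_sorted_eigenvalues (bandA s) ls \<and> abs_sorted_eigenvalues (compB s) gs
            \<and> eigenvector (bandA s) v (ls ! 1) \<and> eigenvector (compB s) v (gs ! 1))"
proof (intro conjI allI impI)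
  fix ls gs assume "abs_sorted_eigenvalues (bandA s) ls \<and> abs_sorted_eigenvalues (compB s) gs"
  thus "\<bar>ls ! 1\<bar> = \<bar>gs ! 1\<bar>"
    using bandA_second_abs_eigenvalue compB_second_abs_eigenvalue assms by simp
next
  have "2 \<le> 2 * s" using assms by simp
  note w_A = bandA_eigenvector_mirror_vec[OF assms]
  note w_B = compB_eigenvector_mirror_vec[OF assms, of "-1", simplified]
  obtain ls where ls: "abs_sorted_eigenvalues (bandA s) ls" "ls ! 1 = sigma s"
    using symmetric_abs_sorted_eigenvalues_with_second[OF bandA_carrier bandA_symmetric \<open>2 \<le> 2 * s\<close>]
      w_A bandA_second_abs_eigenvalue[OF assms] sigma_pos[of s]
    unfolding eigenvalue_def by force
  obtain gs where gs: "abs_sorted_eigenvalues (compB s) gs" "gs ! 1 = - sigma s"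
    using symmetric_abs_sorted_eigenvalues_with_second[OF compB_carrier compB_symmetric \<open>2 \<le> 2 * s\<close>]
      w_B compB_second_abs_eigenvalue[OF assms] sigma_pos[of s]
    unfolding eigenvalue_def by force
  show "\<exists>ls gs v. abs_sorted_eigenvalues (bandA s) ls \<and> abs_sorted_eigenvalues (compB s) gs
      \<and> eigenvector (bandA s) v (ls ! 1) \<and> eigenvector (compB s) v (gs ! 1)"
    using ls gs w_A w_B by (intro exI[of _ ls] exI[of _ gs] exI[of _ "mirror_vec s (-1)"]) simp
qed

end
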